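(* Let $\mathfrak{A}$ be a $(\circ,\wedge,\mathsf{A})$-algebra that is representable by partial functions, and let $a\in\mathfrak{A}$. Then the down-set ${\downarrow}a=\{b\in\mathfrak{A}\mid b\le a\}$, with least element $0$, greatest element $a$, meet given by $\wedge$, and complementation given by $\overline{b}:=\mathsf{A}(b)\circ a$, is a Boolean algebra. Moreover, for any representation $\theta$ of $\mathfrak{A}$ by partial functions, the restriction of $\theta$ to ${\downarrow}a$ is a representation of this Boolean algebra as a field of subsets of $\theta(a)$ (i.e. it is injective, $\theta(0)=\emptyset$, $\theta(b\wedge c)=\theta(b)\cap\theta(c)$, and $\theta(\overline{b})=\theta(a)\setminus\theta(b)$ for $b,c\le a$). If $\theta$ is meet complete or join complete, then this representation of ${\downarrow}a$ as a field of sets is complete (every existing join in ${\downarrow}a$ is sent to the union, and every existing meet of a nonempty subset is sent to the intersection).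
   Context: A $(\circ,\wedge,\mathsf{A})$-algebra is a set with two binary operations $\circ,\wedge$ and one unary operation $\mathsf{A}$. An algebra of partial functions of this signature is a set of partial functions (viewed as sets of ordered pairs), with base $X$ the union of all their domains and ranges, closed under: composition $f\circ g=\{(x,z)\mid \exists y\,(x,y)\in f,(y,z)\in g\}$ (apply $f$ first, then $g$); intersection $f\wedge g=f\cap g$; antidomain $\mathsf{A}(f)=\{(x,x)\mid x\in X, x\notin\mathrm{dom}(f)\}$. A representation by partial functions is an isomorphism onto such an algebra; $\mathfrak{A}$ is representable if one exists. A representable algebra is a $\wedge$-semilattice, ordered by $a\le b\iff a\wedge b=a$, with least element $0=\mathsf{A}(a)\circ a$ (any $a$), always represented by $\emptyset$. A representation $\theta$ is meet complete if for every nonempty $S\subseteq\mathfrak{A}$ such that $\bigwedge S$ exists, $\theta(\bigwedge S)=\bigcap\theta[S]$; it is join complete if for every $S\subseteq\mathfrak{A}$ such that $\bigvee S$ exists, $\theta(\bigvee S)=\bigcup\theta[S]$. *)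

theory Defs
  imports Main
begin

text \<open>An algebra of signature (cmp, meet, antidom) is given by its three operations on
  a carrier type 'a.  A partial function on a base is a single-valued relation.\<close>

definition base :: "('a \<Rightarrow> ('x \<times> 'x) set) \<Rightarrow> 'x set" where
  "base \<theta> = (\<Union>f. Domain (\<theta> f) \<union> Range (\<theta> f))"

definition is_representation ::
  "('a \<Rightarrow> 'a \<Rightarrow> 'a) \<Rightarrow> ('a \<Rightarrow> 'a \<Rightarrow> 'a) \<Rightarrow> ('a \<Rightarrow> 'a)
   \<Rightarrow> ('a \<Rightarrow> ('x \<times> 'x) set) \<Rightarrow> bool" where
  "is_representation cmp meet antidom \<theta> \<longleftrightarrow>
     inj \<theta> \<and>
     (\<forall>f. single_valued (\<theta> f)) \<and>
     (\<forall>f g. \<theta> (cmp f g) = \<theta> f O \<theta> g) \<and>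
     (\<forall>f g. \<theta> (meet f g) = \<theta> f \<inter> \<theta> g) \<and>
     (\<forall>f. \<theta> (antidom f) = {(x, x) | x. x \<in> base \<theta> \<and> x \<notin> Domain (\<theta> f)})"

definition alg_le :: "('a \<Rightarrow> 'a \<Rightarrow> 'a) \<Rightarrow> 'a \<Rightarrow> 'a \<Rightarrow> bool" where
  "alg_le meet x y \<longleftrightarrow> meet x y = x"

definition downset :: "('a \<Rightarrow> 'a \<Rightarrow> 'a) \<Rightarrow> 'a \<Rightarrow> 'a set" where
  "downset meet a = {b. alg_le meet b a}"

definition is_lub_in :: "('a \<Rightarrow> 'a \<Rightarrow> 'a) \<Rightarrow> 'a set \<Rightarrow> 'a set \<Rightarrow> 'a \<Rightarrow> bool" where
  "is_lub_in meet D S x \<longleftrightarrow> x \<in> D \<and> (\<forall>s\<in>S. alg_le meet s x) \<and>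
     (\<forall>u\<in>D. (\<forall>s\<in>S. alg_le meet s u) \<longrightarrow> alg_le meet x u)"

definition is_glb_in :: "('a \<Rightarrow> 'a \<Rightarrow> 'a) \<Rightarrow> 'a set \<Rightarrow> 'a set \<Rightarrow> 'a \<Rightarrow> bool" where
  "is_glb_in meet D S x \<longleftrightarrow> x \<in> D \<and> (\<forall>s\<in>S. alg_le meet x s) \<and>
     (\<forall>u\<in>D. (\<forall>s\<in>S. alg_le meet u s) \<longrightarrow> alg_le meet u x)"

definition meet_complete ::
  "('a \<Rightarrow> 'a \<Rightarrow> 'a) \<Rightarrow> ('a \<Rightarrow> ('x \<times> 'x) set) \<Rightarrow> bool" where
  "meet_complete meet \<theta> \<longleftrightarrow>
     (\<forall>S m. S \<noteq> {} \<longrightarrow> is_glb_in meet UNIV S m \<longrightarrow> \<theta> m = \<Inter> (\<theta> ` S))"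

definition join_complete ::
  "('a \<Rightarrow> 'a \<Rightarrow> 'a) \<Rightarrow> ('a \<Rightarrow> ('x \<times> 'x) set) \<Rightarrow> bool" where
  "join_complete meet \<theta> \<longleftrightarrow>
     (\<forall>S j. is_lub_in meet UNIV S j \<longrightarrow> \<theta> j = \<Union> (\<theta> ` S))"

definition boolean_algebra_on ::
  "'a set \<Rightarrow> ('a \<Rightarrow> 'a \<Rightarrow> 'a) \<Rightarrow> ('a \<Rightarrow> 'a) \<Rightarrow> 'a \<Rightarrow> 'a \<Rightarrow> bool" where
  "boolean_algebra_on B mt cp z t \<longleftrightarrow>
    (let jn = (\<lambda>x y. cp (mt (cp x) (cp y))) in
     z \<in> B \<and> t \<in> B \<and>
     (\<forall>x\<in>B. \<forall>y\<in>B. mt x y \<in> B) \<and> (\<forall>x\<in>B. cp x \<in> B) \<and>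
     (\<forall>x\<in>B. \<forall>y\<in>B. mt x y = mt y x \<and> jn x y = jn y x) \<and>
     (\<forall>x\<in>B. \<forall>y\<in>B. \<forall>w\<in>B. mt x (mt y w) = mt (mt x y) w \<and> jn x (jn y w) = jn (jn x y) w) \<and>
     (\<forall>x\<in>B. \<forall>y\<in>B. mt x (jn x y) = x \<and> jn x (mt x y) = x) \<and>
     (\<forall>x\<in>B. \<forall>y\<in>B. \<forall>w\<in>B. mt x (jn y w) = jn (mt x y) (mt x w)) \<and>
     (\<forall>x\<in>B. mt x z = z \<and> mt x t = x) \<and>
     (\<forall>x\<in>B. mt x (cp x) = z \<and> jn x (cp x) = t))"

end

theory Submission
  imports Defs
begin

(* A representation \<theta> is injective and turns meet into intersection,
   so it is an order embedding of the algebra into (range \<theta>, \<subseteq>).  For b \<le> a the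
   element A(b) \<circ> a is represented by the restriction of \<theta> a to the points outside
   dom \<theta> b; since \<theta> a is single valued and \<theta> b \<subseteq> \<theta> a this is exactly \<theta> a - \<theta> b.
   Hence \<theta> maps the down-set of a bijectively onto a family of subsets of \<theta> a
   that contains \<theta> a and is closed under intersection and relative complement,
   and every Boolean algebra law is pulled back along the injection \<theta>.

   Completeness is a statement about families of sets.  Inside a field of subsets
   F of T, relative complement is an order-reversing involution, so meets of F are
   intersections iff joins of F are unions.  If F = {X \<in> R. X \<subseteq> T} is a principal
   down-set of an intersection-closed family R, then nonempty meets and all joins
   computed in F are also meets and joins in R.  Thus meet completeness (or join
   completeness) of \<theta> on the whole algebra passes to the down-set, and the dual
   property follows from the field-of-sets lemma. *)

section \<open>Order and bounds in families of sets\<close>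

lemma alg_le_Int [simp]: "alg_le (\<inter>) X Y \<longleftrightarrow> X \<subseteq> Y"
  by (auto simp: alg_le_def)

definition glbs_are_Inters :: "'x set set \<Rightarrow> bool" where
  "glbs_are_Inters R \<longleftrightarrow>
     (\<forall>\<S> M. \<S> \<subseteq> R \<longrightarrow> \<S> \<noteq> {} \<longrightarrow> is_glb_in (\<inter>) R \<S> M \<longrightarrow> M = \<Inter>\<S>)"

definition lubs_are_Unions :: "'x set set \<Rightarrow> bool" where
  "lubs_are_Unions R \<longleftrightarrow> (\<forall>\<S> J. \<S> \<subseteq> R \<longrightarrow> is_lub_in (\<inter>) R \<S> J \<longrightarrow> J = \<Union>\<S>)"

lemma glbs_are_IntersI:
  "(\<And>\<S> M. \<S> \<subseteq> R \<Longrightarrow> \<S> \<noteq> {} \<Longrightarrow> is_glb_in (\<inter>) R \<S> M \<Longrightarrow> M = \<Inter>\<S>)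
    \<Longrightarrow> glbs_are_Inters R"
  by (simp add: glbs_are_Inters_def)

lemma glbs_are_IntersD:
  "glbs_are_Inters R \<Longrightarrow> \<S> \<subseteq> R \<Longrightarrow> \<S> \<noteq> {} \<Longrightarrow> is_glb_in (\<inter>) R \<S> M \<Longrightarrow> M = \<Inter>\<S>"
  by (simp add: glbs_are_Inters_def)

lemma lubs_are_UnionsI:
  "(\<And>\<S> J. \<S> \<subseteq> R \<Longrightarrow> is_lub_in (\<inter>) R \<S> J \<Longrightarrow> J = \<Union>\<S>) \<Longrightarrow> lubs_are_Unions R"
  by (simp add: lubs_are_Unions_def)

lemma lubs_are_UnionsD:
  "lubs_are_Unions R \<Longrightarrow> \<S> \<subseteq> R \<Longrightarrow> is_lub_in (\<inter>) R \<S> J \<Longrightarrow> J = \<Union>\<S>"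
  by (simp add: lubs_are_Unions_def)

lemma lub_complement_glb:
  assumes F: "F \<subseteq> Pow T" "\<And>X. X \<in> F \<Longrightarrow> T - X \<in> F"
    and J: "is_lub_in (\<inter>) F \<S> J"
  shows "is_glb_in (\<inter>) F ((-) T ` \<S>) (T - J)"
  unfolding is_glb_in_def
proof (intro conjI ballI impI)
  show "T - J \<in> F" using J F by (simp add: is_lub_in_def)
  show "alg_le (\<inter>) (T - J) Y" if "Y \<in> (-) T ` \<S>" for Y
    using that J by (auto simp: is_lub_in_def)
  show "alg_le (\<inter>) U (T - J)" if U: "U \<in> F" and lb: "\<forall>Y\<in>(-) T ` \<S>. alg_le (\<inter>) U Y" for U
  proof -
    have "\<forall>X\<in>\<S>. X \<subseteq> T" using J F(1) unfolding is_lub_in_def alg_le_Int by blast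
    then have "\<forall>X\<in>\<S>. X \<subseteq> T - U" using lb by auto
    then have "J \<subseteq> T - U" using J F(2)[OF U] by (simp add: is_lub_in_def)
    then show ?thesis using U F(1) by auto
  qed
qed

lemma glb_complement_lub:
  assumes F: "F \<subseteq> Pow T" "\<And>X. X \<in> F \<Longrightarrow> T - X \<in> F"
    and M: "is_glb_in (\<inter>) F \<S> M"
  shows "is_lub_in (\<inter>) F ((-) T ` \<S>) (T - M)"
  unfolding is_lub_in_def
proof (intro conjI ballI impI)
  show "T - M \<in> F" using M F by (simp add: is_glb_in_def)
  show "alg_le (\<inter>) Y (T - M)" if "Y \<in> (-) T ` \<S>" for Y
    using that M by (auto simp: is_glb_in_def)
  show "alg_le (\<inter>) (T - M) U" if U: "U \<in> F" and ub: "\<forall>Y\<in>(-) T ` \<S>. alg_le (\<inter>) Y U" for U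
  proof -
    have "\<forall>X\<in>\<S>. T - U \<subseteq> X" using ub by auto
    then have "T - U \<subseteq> M" using M F(2)[OF U] by (simp add: is_glb_in_def)
    then show ?thesis using M F(1) by (auto simp: is_glb_in_def)
  qed
qed

lemma field_of_sets_glbs_iff_lubs:
  assumes F: "F \<subseteq> Pow T" "\<And>X. X \<in> F \<Longrightarrow> T - X \<in> F" and top: "T \<in> F"
  shows "glbs_are_Inters F \<longleftrightarrow> lubs_are_Unions F"
proof
  assume glbs: "glbs_are_Inters F"
  show "lubs_are_Unions F"
  proof (rule lubs_are_UnionsI)
    fix \<S> J assume S: "\<S> \<subseteq> F" and J: "is_lub_in (\<inter>) F \<S> J"
    have JT: "J \<subseteq> T" using J F(1) unfolding is_lub_in_def by blast
    show "J = \<Union>\<S>"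
    proof (cases "\<S> = {}")
      case True
      have "{} \<in> F" using F(2)[OF top] by simp
      then have "J \<subseteq> {}" using J True unfolding is_lub_in_def alg_le_Int by blast
      then show ?thesis using True by simp
    next
      case False
      have "(-) T ` \<S> \<subseteq> F" using S F(2) by auto
      moreover have "(-) T ` \<S> \<noteq> {}" using False by simp
      ultimately have "T - J = \<Inter>((-) T ` \<S>)"
        using lub_complement_glb[OF F J] by (rule glbs_are_IntersD[OF glbs])
      then have "T - J = T - \<Union>\<S>" using False by simp
      moreover have "\<Union>\<S> \<subseteq> T" using S F(1) by blast
      ultimately show ?thesis using JT by (metis double_diff order_refl)
    qed
  qed
next
  assume lubs: "lubs_are_Unions F"
  show "glbs_are_Inters F"
  proof (rule glbs_are_IntersI)
    fix \<S> M assume S: "\<S> \<subseteq> F" and ne: "\<S> \<noteq> {}" and M: "is_glb_in (\<inter>) F \<S> M"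
    have "(-) T ` \<S> \<subseteq> F" using S F(2) by auto
    then have "T - M = \<Union>((-) T ` \<S>)"
      by (rule lubs_are_UnionsD[OF lubs _ glb_complement_lub[OF F M]])
    then have "T - M = T - \<Inter>\<S>" by simp
    moreover have "M \<subseteq> T" using M F(1) unfolding is_glb_in_def by blast
    moreover have "\<Inter>\<S> \<subseteq> T" using S F(1) ne by blast
    ultimately show "M = \<Inter>\<S>" by (metis double_diff order_refl)
  qed
qed

text \<open>Bounds computed in a principal down-set {X \<in> R. X \<subseteq> T} are bounds in R:
  a nonempty family has all its lower bounds below T, and an upper bound U in R
  can be cut down to U \<inter> T when R is closed under intersection.\<close>

lemma glb_in_principal_downset:
  assumes "\<S> \<noteq> {}" "\<S> \<subseteq> {X \<in> R. X \<subseteq> T}" "is_glb_in (\<inter>) {X \<in> R. X \<subseteq> T} \<S> M"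
  shows "is_glb_in (\<inter>) R \<S> M"
proof -
  obtain X where "X \<in> \<S>" "X \<subseteq> T" using assms(1,2) by blast
  then have "\<forall>U. (\<forall>Y\<in>\<S>. U \<subseteq> Y) \<longrightarrow> U \<subseteq> T" by blast
  then show ?thesis using assms(3) unfolding is_glb_in_def alg_le_Int by blast
qed

lemma lub_in_principal_downset:
  assumes Int: "\<And>X Y. X \<in> R \<Longrightarrow> Y \<in> R \<Longrightarrow> X \<inter> Y \<in> R" and top: "T \<in> R"
    and S: "\<S> \<subseteq> {X \<in> R. X \<subseteq> T}" and J: "is_lub_in (\<inter>) {X \<in> R. X \<subseteq> T} \<S> J"
  shows "is_lub_in (\<inter>) R \<S> J"
  unfolding is_lub_in_def
proof (intro conjI ballI impI)
  show "J \<in> R" "\<And>X. X \<in> \<S> \<Longrightarrow> alg_le (\<inter>) X J" using J by (auto simp: is_lub_in_def)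
  show "alg_le (\<inter>) J U" if "U \<in> R" "\<forall>X\<in>\<S>. alg_le (\<inter>) X U" for U
  proof -
    have "U \<inter> T \<in> {X \<in> R. X \<subseteq> T}" using Int[OF \<open>U \<in> R\<close> top] by simp
    moreover have "\<forall>X\<in>\<S>. X \<subseteq> U \<inter> T" using that S by auto
    ultimately have "J \<subseteq> U \<inter> T" using J unfolding is_lub_in_def alg_le_Int by blast
    then show ?thesis by simp
  qed
qed

lemma principal_field_of_sets_complete:
  assumes Int: "\<And>X Y. X \<in> R \<Longrightarrow> Y \<in> R \<Longrightarrow> X \<inter> Y \<in> R" and top: "T \<in> R"
    and compl: "\<And>X. X \<in> R \<Longrightarrow> X \<subseteq> T \<Longrightarrow> T - X \<in> R"
    and complete: "glbs_are_Inters R \<or> lubs_are_Unions R"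
  shows "lubs_are_Unions {X \<in> R. X \<subseteq> T} \<and> glbs_are_Inters {X \<in> R. X \<subseteq> T}"
proof -
  let ?F = "{X \<in> R. X \<subseteq> T}"
  have equiv: "glbs_are_Inters ?F \<longleftrightarrow> lubs_are_Unions ?F"
    by (rule field_of_sets_glbs_iff_lubs[where T = T]) (use top compl in auto)
  from complete have "glbs_are_Inters ?F \<or> lubs_are_Unions ?F"
  proof
    assume glbs: "glbs_are_Inters R"
    have "glbs_are_Inters ?F"
    proof (rule glbs_are_IntersI)
      fix \<S> M assume S: "\<S> \<subseteq> ?F" and ne: "\<S> \<noteq> {}" and M: "is_glb_in (\<inter>) ?F \<S> M"
      have "\<S> \<subseteq> R" using S by blast
      then show "M = \<Inter>\<S>"
        using ne glb_in_principal_downset[OF ne S M] by (rule glbs_are_IntersD[OF glbs])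
    qed
    then show ?thesis ..
  next
    assume lubs: "lubs_are_Unions R"
    have "lubs_are_Unions ?F"
    proof (rule lubs_are_UnionsI)
      fix \<S> J assume S: "\<S> \<subseteq> ?F" and J: "is_lub_in (\<inter>) ?F \<S> J"
      have "\<S> \<subseteq> R" using S by blast
      then show "J = \<Union>\<S>"
        using lub_in_principal_downset[OF Int top S J] by (rule lubs_are_UnionsD[OF lubs])
    qed
    then show ?thesis ..
  qed
  then show ?thesis using equiv by blast
qed

section \<open>Boolean algebras from fields of sets\<close>

text \<open>If an injection maps B onto a family of subsets of T so that mt becomes
  intersection, cp becomes relative complement, z becomes {} and t becomes T, then
  (B, mt, cp, z, t) is a Boolean algebra: every law holds for the image sets.\<close>

lemma boolean_algebra_on_field_of_sets:
  assumes inj: "inj_on \<theta> B"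
    and sub: "\<And>x. x \<in> B \<Longrightarrow> \<theta> x \<subseteq> T"
    and mt: "\<And>x y. x \<in> B \<Longrightarrow> y \<in> B \<Longrightarrow> mt x y \<in> B \<and> \<theta> (mt x y) = \<theta> x \<inter> \<theta> y"
    and cp: "\<And>x. x \<in> B \<Longrightarrow> cp x \<in> B \<and> \<theta> (cp x) = T - \<theta> x"
    and z: "z \<in> B" "\<theta> z = {}" and t: "t \<in> B" "\<theta> t = T"
  shows "boolean_algebra_on B mt cp z t"
proof -
  have eq: "x = y \<longleftrightarrow> \<theta> x = \<theta> y" if "x \<in> B" "y \<in> B" for x y
    using inj that by (auto dest: inj_onD)
  define jn where "jn = (\<lambda>x y. cp (mt (cp x) (cp y)))"
  have jn: "jn x y \<in> B \<and> \<theta> (jn x y) = \<theta> x \<union> \<theta> y" if "x \<in> B" "y \<in> B" for x y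
    using that sub mt cp unfolding jn_def by auto
  show ?thesis
    unfolding boolean_algebra_on_def Let_def jn_def[symmetric]
    using z t by (simp add: eq mt cp jn sub Int_ac Un_ac Int_Un_distrib Int_absorb1 Un_absorb2)
qed

section \<open>Representations by partial functions\<close>

lemma single_valued_restrict_Domain:
  assumes "single_valued R" "S \<subseteq> R"
  shows "{(x, y) \<in> R. x \<notin> Domain S} = R - S"
  using assms unfolding single_valued_def by blast

context
  fixes cmp meet :: "'a \<Rightarrow> 'a \<Rightarrow> 'a" and antidom :: "'a \<Rightarrow> 'a"
    and \<theta> :: "'a \<Rightarrow> ('x \<times> 'x) set"
  assumes rep: "is_representation cmp meet antidom \<theta>"
begin

lemma rep_meet: "\<theta> (meet f g) = \<theta> f \<inter> \<theta> g"
  using rep by (simp add: is_representation_def)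

lemma rep_inj: "inj \<theta>"
  using rep by (simp add: is_representation_def)

lemma rep_le: "alg_le meet x y \<longleftrightarrow> \<theta> x \<subseteq> \<theta> y"
  unfolding alg_le_def by (metis rep_inj rep_meet inj_eq inf.absorb_iff1)

lemma rep_downset: "x \<in> downset meet a \<longleftrightarrow> \<theta> x \<subseteq> \<theta> a"
  by (simp add: downset_def rep_le)

lemma rep_image_downset: "\<theta> ` downset meet a = {X \<in> range \<theta>. X \<subseteq> \<theta> a}"
  by (auto simp: rep_downset)

text \<open>Since \<theta> is an order embedding, bounds in the algebra are bounds of the images.\<close>

lemma rep_is_lub_in: "is_lub_in meet D S j \<longleftrightarrow> is_lub_in (\<inter>) (\<theta> ` D) (\<theta> ` S) (\<theta> j)"
  using inj_image_mem_iff[OF rep_inj] by (simp add: is_lub_in_def rep_le)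

lemma rep_is_glb_in: "is_glb_in meet D S m \<longleftrightarrow> is_glb_in (\<inter>) (\<theta> ` D) (\<theta> ` S) (\<theta> m)"
  using inj_image_mem_iff[OF rep_inj] by (simp add: is_glb_in_def rep_le)

text \<open>A subfamily of range \<theta> is the image of its preimage, so completeness of \<theta>
  is a property of the family range \<theta>.\<close>

lemma rep_meet_complete: "meet_complete meet \<theta> \<longleftrightarrow> glbs_are_Inters (range \<theta>)"
proof
  assume complete: "meet_complete meet \<theta>"
  show "glbs_are_Inters (range \<theta>)"
  proof (rule glbs_are_IntersI)
    fix \<S> M assume S: "\<S> \<subseteq> range \<theta>" and ne: "\<S> \<noteq> {}" and M: "is_glb_in (\<inter>) (range \<theta>) \<S> M"
    have "M \<in> range \<theta>" using M by (simp add: is_glb_in_def)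
    then obtain m where m: "M = \<theta> m" by blast
    have img: "\<theta> ` (\<theta> -` \<S>) = \<S>" using S by (simp add: image_vimage_eq Int_absorb2)
    have glb: "is_glb_in meet UNIV (\<theta> -` \<S>) m"
      using rep_is_glb_in[of UNIV "\<theta> -` \<S>" m] M unfolding img m by blast
    have "\<theta> -` \<S> \<noteq> {}" using ne img by (metis image_empty)
    then have "\<theta> m = \<Inter> (\<theta> ` (\<theta> -` \<S>))"
      using glb by (rule complete[unfolded meet_complete_def, rule_format])
    then show "M = \<Inter>\<S>" unfolding img m .
  qed
next
  assume glbs: "glbs_are_Inters (range \<theta>)"
  show "meet_complete meet \<theta>" unfolding meet_complete_def
  proof (intro allI impI)
    fix S m assume "S \<noteq> {}" and m: "is_glb_in meet UNIV S m"
    then have "\<theta> ` S \<noteq> {}" by simp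
    then show "\<theta> m = \<Inter> (\<theta> ` S)"
      using rep_is_glb_in[THEN iffD1, OF m]
      by (rule glbs_are_IntersD[OF glbs image_mono[OF subset_UNIV]])
  qed
qed

lemma rep_join_complete: "join_complete meet \<theta> \<longleftrightarrow> lubs_are_Unions (range \<theta>)"
proof
  assume complete: "join_complete meet \<theta>"
  show "lubs_are_Unions (range \<theta>)"
  proof (rule lubs_are_UnionsI)
    fix \<S> J assume S: "\<S> \<subseteq> range \<theta>" and J: "is_lub_in (\<inter>) (range \<theta>) \<S> J"
    have "J \<in> range \<theta>" using J by (simp add: is_lub_in_def)
    then obtain j where j: "J = \<theta> j" by blast
    have img: "\<theta> ` (\<theta> -` \<S>) = \<S>" using S by (simp add: image_vimage_eq Int_absorb2)
    have "is_lub_in meet UNIV (\<theta> -` \<S>) j"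
      using rep_is_lub_in[of UNIV "\<theta> -` \<S>" j] J unfolding img j by blast
    then have "\<theta> j = \<Union> (\<theta> ` (\<theta> -` \<S>))"
      by (rule complete[unfolded join_complete_def, rule_format])
    then show "J = \<Union>\<S>" unfolding img j .
  qed
next
  assume lubs: "lubs_are_Unions (range \<theta>)"
  show "join_complete meet \<theta>" unfolding join_complete_def
  proof (intro allI impI)
    fix S j assume "is_lub_in meet UNIV S j"
    then show "\<theta> j = \<Union> (\<theta> ` S)"
      by (rule lubs_are_UnionsD[OF lubs image_mono[OF subset_UNIV] rep_is_lub_in[THEN iffD1]])
  qed
qed

lemma rep_antidom_cmp: "\<theta> (cmp (antidom b) c) = {(x, y) \<in> \<theta> c. x \<notin> Domain (\<theta> b)}"
proof -
  have "\<theta> (cmp (antidom b) c) = {(x, x) |x. x \<in> base \<theta> \<and> x \<notin> Domain (\<theta> b)} O \<theta> c"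
    using rep by (simp add: is_representation_def)
  moreover have "Domain (\<theta> c) \<subseteq> base \<theta>" unfolding base_def by blast
  ultimately show ?thesis by blast
qed

lemma rep_relative_complement:
  assumes "\<theta> b \<subseteq> \<theta> a"
  shows "\<theta> (cmp (antidom b) a) = \<theta> a - \<theta> b"
proof -
  have "single_valued (\<theta> a)" using rep by (simp add: is_representation_def)
  then show ?thesis
    using single_valued_restrict_Domain[OF _ assms] by (simp add: rep_antidom_cmp)
qed

lemma rep_range_Int:
  assumes "X \<in> range \<theta>" "Y \<in> range \<theta>"
  shows "X \<inter> Y \<in> range \<theta>"
proof -
  from assms obtain x y where "X = \<theta> x" "Y = \<theta> y" by blast
  then have "X \<inter> Y = \<theta> (meet x y)" by (simp add: rep_meet)
  then show ?thesis by simp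
qed

lemma rep_range_relative_complement:
  assumes "X \<in> range \<theta>" "X \<subseteq> \<theta> a"
  shows "\<theta> a - X \<in> range \<theta>"
proof -
  from assms(1) obtain b where "X = \<theta> b" by blast
  then have "\<theta> a - X = \<theta> (cmp (antidom b) a)" using assms(2) rep_relative_complement by simp
  then show ?thesis by simp
qed

text \<open>The down-set of a, with complement b \<mapsto> A(b) \<circ> a, is a Boolean algebra,
  because \<theta> maps it onto a field of subsets of \<theta> a.\<close>

lemma rep_downset_boolean_algebra:
  "boolean_algebra_on (downset meet a) meet (\<lambda>b. cmp (antidom b) a) (cmp (antidom a) a) a"
proof (rule boolean_algebra_on_field_of_sets)
  show "inj_on \<theta> (downset meet a)" using rep_inj by (rule inj_on_subset) simp
  show "\<theta> x \<subseteq> \<theta> a" if "x \<in> downset meet a" for x using that by (simp add: rep_downset)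
  show "meet x y \<in> downset meet a \<and> \<theta> (meet x y) = \<theta> x \<inter> \<theta> y"
    if "x \<in> downset meet a" "y \<in> downset meet a" for x y
    using that by (auto simp: rep_downset rep_meet)
  show "cmp (antidom x) a \<in> downset meet a \<and> \<theta> (cmp (antidom x) a) = \<theta> a - \<theta> x"
    if "x \<in> downset meet a" for x
    using that by (simp add: rep_downset rep_relative_complement)
  show "cmp (antidom a) a \<in> downset meet a" "\<theta> (cmp (antidom a) a) = {}"
    "a \<in> downset meet a" "\<theta> a = \<theta> a"
    by (simp_all add: rep_downset rep_relative_complement)
qed

lemma rep_downset_complete:
  assumes "meet_complete meet \<theta> \<or> join_complete meet \<theta>"
  shows "lubs_are_Unions (\<theta> ` downset meet a) \<and> glbs_are_Inters (\<theta> ` downset meet a)"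
proof -
  have "glbs_are_Inters (range \<theta>) \<or> lubs_are_Unions (range \<theta>)"
    using assms rep_meet_complete rep_join_complete by blast
  then show ?thesis
    unfolding rep_image_downset
  proof (rule principal_field_of_sets_complete[rotated 3])
    show "X \<inter> Y \<in> range \<theta>" if "X \<in> range \<theta>" "Y \<in> range \<theta>" for X Y
      using that by (rule rep_range_Int)
    show "\<theta> a - X \<in> range \<theta>" if "X \<in> range \<theta>" "X \<subseteq> \<theta> a" for X
      using that by (rule rep_range_relative_complement)
  qed (rule rangeI)
qed

lemma rep_lub_Union:
  "lubs_are_Unions (\<theta> ` D) \<Longrightarrow> S \<subseteq> D \<Longrightarrow> is_lub_in meet D S j \<Longrightarrow> \<theta> j = \<Union> (\<theta> ` S)"
  by (rule lubs_are_UnionsD[OF _ image_mono rep_is_lub_in[THEN iffD1]])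

lemma rep_glb_Inter:
  assumes "glbs_are_Inters (\<theta> ` D)" "S \<subseteq> D" "S \<noteq> {}" "is_glb_in meet D S m"
  shows "\<theta> m = \<Inter> (\<theta> ` S)"
  using assms(1) image_mono[OF assms(2)] _ rep_is_glb_in[THEN iffD1, OF assms(4)]
  by (rule glbs_are_IntersD) (use assms(3) in simp)

end

theorem mainTheorem1:
  fixes cmp meet :: "'a \<Rightarrow> 'a \<Rightarrow> 'a" and antidom :: "'a \<Rightarrow> 'a"
    and \<theta> :: "'a \<Rightarrow> ('x \<times> 'x) set" and a :: 'a
  assumes rep: "is_representation cmp meet antidom \<theta>"
  defines "zero \<equiv> cmp (antidom a) a"
  defines "cmpl \<equiv> (\<lambda>b. cmp (antidom b) a)"
  shows "boolean_algebra_on (downset meet a) meet cmpl zero a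
    \<and> inj_on \<theta> (downset meet a)
    \<and> \<theta> zero = {}
    \<and> (\<forall>b\<in>downset meet a. \<forall>c\<in>downset meet a. \<theta> (meet b c) = \<theta> b \<inter> \<theta> c)
    \<and> (\<forall>b\<in>downset meet a. \<theta> (cmpl b) = \<theta> a - \<theta> b)
    \<and> ((meet_complete meet \<theta> \<or> join_complete meet \<theta>) \<longrightarrow>
        (\<forall>S j. S \<subseteq> downset meet a \<longrightarrow> is_lub_in meet (downset meet a) S j
               \<longrightarrow> \<theta> j = \<Union> (\<theta> ` S)) \<and>
        (\<forall>S m. S \<subseteq> downset meet a \<longrightarrow> S \<noteq> {} \<longrightarrow> is_glb_in meet (downset meet a) S m
               \<longrightarrow> \<theta> m = \<Inter> (\<theta> ` S)))"
proof -
  let ?D = "downset meet a"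
  show ?thesis unfolding zero_def cmpl_def
  proof (intro conjI ballI impI allI)
    show "boolean_algebra_on ?D meet (\<lambda>b. cmp (antidom b) a) (cmp (antidom a) a) a"
      by (rule rep_downset_boolean_algebra[OF rep])
    show "inj_on \<theta> ?D" using rep_inj[OF rep] by (rule inj_on_subset) simp
    show "\<theta> (cmp (antidom a) a) = {}" by (simp add: rep_relative_complement[OF rep])
    show "\<theta> (meet b c) = \<theta> b \<inter> \<theta> c" for b c by (rule rep_meet[OF rep])
    show "\<theta> (cmp (antidom b) a) = \<theta> a - \<theta> b" if "b \<in> ?D" for b
      using that by (simp add: rep_downset[OF rep] rep_relative_complement[OF rep])
  next
    fix S j assume complete: "meet_complete meet \<theta> \<or> join_complete meet \<theta>"
      and S: "S \<subseteq> ?D" and j: "is_lub_in meet ?D S j"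
    from conjunct1[OF rep_downset_complete[OF rep complete]] S j
    show "\<theta> j = \<Union> (\<theta> ` S)" by (rule rep_lub_Union[OF rep])
  next
    fix S m assume complete: "meet_complete meet \<theta> \<or> join_complete meet \<theta>"
      and S: "S \<subseteq> ?D" and ne: "S \<noteq> {}" and m: "is_glb_in meet ?D S m"
    from conjunct2[OF rep_downset_complete[OF rep complete]] S ne m
    show "\<theta> m = \<Inter> (\<theta> ` S)" by (rule rep_glb_Inter[OF rep])
  qed
qed

end
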